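(* Let $k \ge 1$ and $m \ge 1$, and define \[ a(n) = \begin{cases} \frac14\binom{n+2}{3}, & n \text{ even},\\ \frac{1}{24}(n-1)(n+1)(n+3), & n \text{ odd}\end{cases} \] (the number of odd biGrassmannian permutations of $[n]$). Then the number of odd biGrassmannian permutations of $[m]$ that avoid $\operatorname{id}_k=12\cdots k$ equals $a(m)$ if $m \le k$; equals $a(2k-m)$ if $k < m < 2k$ and $m-k$ is even; equals $a(2k-m-2)$ if $k < m < 2k$ and $m-k$ is odd; and equals $0$ if $m \ge 2k$.
   Context: A permutation is Grassmannian if it has at most one descent; it is biGrassmannian if both it and its inverse are Grassmannian; it is odd if it has an odd number of inversions. A permutation avoids $12\cdots k$ if it has no increasing subsequence of length $k$. *)

theory Defs
  imports Complex_Main "HOL-Combinatorics.Permutations"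
begin

text \<open>Permutations of [m] = {1..m} are functions p with p permutes {1..m}.\<close>

definition descents :: "nat \<Rightarrow> (nat \<Rightarrow> nat) \<Rightarrow> nat set" where
  "descents m p = {i. 1 \<le> i \<and> i < m \<and> p i > p (Suc i)}"

definition grassmannian :: "nat \<Rightarrow> (nat \<Rightarrow> nat) \<Rightarrow> bool" where
  "grassmannian m p \<longleftrightarrow> card (descents m p) \<le> 1"

definition bigrassmannian :: "nat \<Rightarrow> (nat \<Rightarrow> nat) \<Rightarrow> bool" where
  "bigrassmannian m p \<longleftrightarrow> grassmannian m p \<and> grassmannian m (inv p)"

definition inversions :: "nat \<Rightarrow> (nat \<Rightarrow> nat) \<Rightarrow> (nat \<times> nat) set" where
  "inversions m p = {(i, j). 1 \<le> i \<and> i < j \<and> j \<le> m \<and> p i > p j}"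

definition odd_perm :: "nat \<Rightarrow> (nat \<Rightarrow> nat) \<Rightarrow> bool" where
  "odd_perm m p \<longleftrightarrow> odd (card (inversions m p))"

definition avoids_id :: "nat \<Rightarrow> nat \<Rightarrow> (nat \<Rightarrow> nat) \<Rightarrow> bool" where
  "avoids_id k m p \<longleftrightarrow>
     \<not> (\<exists>I. I \<subseteq> {1..m} \<and> card I = k \<and> (\<forall>x\<in>I. \<forall>y\<in>I. x < y \<longrightarrow> p x < p y))"

definition a_seq :: "int \<Rightarrow> rat" where
  "a_seq n = (if even n then (1/4) * of_nat (nat (n + 2) choose 3)
              else (1/24) * of_int (n - 1) * of_int (n + 1) * of_int (n + 3))"

end

theory Submission
  imports Defs
begin

text \<open>
  A bigrassmannian permutation of [m] is a block swap: it exchanges two adjacent intervals of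
  positions, of lengths s and r, and fixes everything else. Indeed p and its inverse are increasing
  on two runs each, so p is increasing on four consecutive blocks of positions and maps them onto
  four consecutive blocks of values, hence is a shift on each. The inversions of the block swap are
  the r s pairs across the two intervals, so it is odd iff r and s are odd, and its longest
  increasing subsequence has length m - min r s. The count is therefore the number of triples
  (i, r, s) with i + r + s \<le> m and r, s odd and at least the least odd number c exceeding m - k.
  Writing r = c + 2a and s = c + 2b, these are the lattice points i + 2a + 2b \<le> m - 2c, and
  their number is a(m - 2c + 2).
\<close>

lemma strict_mono_on_atLeastLessThan_Suc:
  fixes f :: "nat \<Rightarrow> 'a::order"
  assumes step: "\<And>x. a \<le> x \<Longrightarrow> Suc x < b \<Longrightarrow> f x < f (Suc x)"
  shows "strict_mono_on {a..<b} f"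
proof (rule strict_mono_onI)
  fix x y assume x: "x \<in> {a..<b}" and y: "y \<in> {a..<b}" and "x < y"
  then have "Suc x \<le> y" by simp
  then show "f x < f y"
    using y
  proof (induction rule: dec_induct)
    case base
    then show ?case using step x by simp
  next
    case (step n)
    then have "f x < f n" "f n < f (Suc n)" using assms[of n] x by auto
    then show ?case by (rule less_trans)
  qed
qed

lemma mono_on_atLeastLessThan_cut:
  fixes f :: "nat \<Rightarrow> 'a::linorder"
  assumes mono: "mono_on {a..<b} f" and "a \<le> b"
  obtains t where "a \<le> t" "t \<le> b" "\<And>x. x \<in> {a..<b} \<Longrightarrow> f x < c \<longleftrightarrow> x < t"
proof (cases "\<exists>x. x \<in> {a..<b} \<and> \<not> f x < c")
  case True
  define t where "t = (LEAST x. x \<in> {a..<b} \<and> \<not> f x < c)"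
  have t: "t \<in> {a..<b}" "\<not> f t < c"
    using LeastI_ex[OF True] unfolding t_def by blast+
  have "f x < c \<longleftrightarrow> x < t" if x: "x \<in> {a..<b}" for x
  proof
    assume "f x < c"
    with x show "x < t" using mono_onD[OF mono t(1) x] t(2) by (metis leI order.strict_trans1)
  next
    assume "x < t"
    with x show "f x < c" using not_less_Least unfolding t_def by blast
  qed
  with t that show thesis by auto
next
  case False
  with that[of b] assms(2) show thesis by auto
qed

lemma permutes_image_restrict:
  assumes "p permutes S"
  shows "p ` {x \<in> S. P x \<and> Q (p x)} = {y \<in> S. Q y \<and> P (inv p y)}"
  using permutes_inverses[OF assms] permutes_in_image[OF assms]
    permutes_in_image[OF permutes_inv[OF assms]]
  by (auto simp: image_iff) (metis)

lemma strict_mono_on_onto_atLeastLessThan: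
  fixes f :: "nat \<Rightarrow> nat"
  assumes mono: "strict_mono_on {a..<b} f" and img: "f ` {a..<b} = {c..<c'}"
  shows "\<And>x. x \<in> {a..<b} \<Longrightarrow> f x = c + (x - a)" and "c' - c = b - a"
proof -
  have inj: "inj_on f {a..<b}" using strict_mono_on_imp_inj_on[OF mono] .
  show "c' - c = b - a" using card_image[OF inj] img by simp
  fix x assume x: "x \<in> {a..<b}"
  have fx: "f x \<in> {c..<c'}" using img x by blast
  have "f ` {a..<x} = {c..<f x}"
  proof
    show "f ` {a..<x} \<subseteq> {c..<f x}"
      using img x strict_mono_onD[OF mono] by fastforce
    show "{c..<f x} \<subseteq> f ` {a..<x}"
    proof
      fix y assume y: "y \<in> {c..<f x}"
      then have "y \<in> f ` {a..<b}" using fx img by auto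
      then obtain z where z: "z \<in> {a..<b}" "y = f z" by blast
      have "z < x"
        using y z x strict_mono_onD[OF mono, of x z] by (metis atLeastLessThan_iff linorder_neqE_nat not_less_iff_gr_or_eq)
      with z show "y \<in> f ` {a..<x}" by auto
    qed
  qed
  then have "x - a = f x - c"
    using card_image[OF inj_on_subset[OF inj, of "{a..<x}"]] x by auto
  with fx show "f x = c + (x - a)" by simp
qed

section \<open>Block swaps\<close>

definition block_swap :: "nat \<Rightarrow> nat \<Rightarrow> nat \<Rightarrow> nat \<Rightarrow> nat" where
  "block_swap i r s x =
     (if x \<le> i then x else if x \<le> i + s then x + r else if x \<le> i + s + r then x - s else x)"

lemma block_swap_block_swap [simp]: "block_swap i s r (block_swap i r s x) = x"
  unfolding block_swap_def by auto

lemma inv_block_swap: "inv (block_swap i r s) = block_swap i s r"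
  by (rule inv_unique_comp) (simp_all add: fun_eq_iff)

lemma block_swap_permutes:
  assumes "i + r + s \<le> m"
  shows "block_swap i r s permutes {1..m}"
proof (rule bij_imp_permutes)
  have "block_swap i r s ` {1..m} \<subseteq> {1..m}" "block_swap i s r ` {1..m} \<subseteq> {1..m}"
    using assms unfolding block_swap_def by auto
  then show "bij_betw (block_swap i r s) {1..m} {1..m}"
    by (intro bij_betw_byWitness[where f' = "block_swap i s r"]) simp_all
  show "x \<notin> {1..m} \<Longrightarrow> block_swap i r s x = x" for x
    using assms unfolding block_swap_def by auto
qed

lemma grassmannian_block_swap: "grassmannian m (block_swap i r s)"
proof -
  have "descents m (block_swap i r s) \<subseteq> {i + s}"
    unfolding descents_def block_swap_def by (auto split: if_splits)
  then have "card (descents m (block_swap i r s)) \<le> card {i + s}"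
    by (intro card_mono) simp_all
  then show ?thesis unfolding grassmannian_def by simp
qed

lemma bigrassmannian_block_swap: "bigrassmannian m (block_swap i r s)"
  unfolding bigrassmannian_def inv_block_swap by (simp add: grassmannian_block_swap)

lemma inversions_block_swap:
  assumes "i + r + s \<le> m"
  shows "inversions m (block_swap i r s) = {i+1..i+s} \<times> {i+s+1..i+s+r}"
  using assms unfolding inversions_def block_swap_def by (auto split: if_splits)

lemma odd_perm_block_swap_iff:
  assumes "i + r + s \<le> m"
  shows "odd_perm m (block_swap i r s) \<longleftrightarrow> odd r \<and> odd s"
  unfolding odd_perm_def inversions_block_swap[OF assms] by (auto simp: card_cartesian_product)

lemma block_swap_inject:
  assumes "block_swap i r s = block_swap i' r' s'" and "0 < r" "0 < s" "0 < r'" "0 < s'"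
  shows "i = i' \<and> r = r' \<and> s = s'"
proof -
  have eq: "block_swap i r s x = block_swap i' r' s' x" for x
    using assms(1) by simp
  have "i = i'"
    using eq[of "Suc (min i i')"] assms(2-) unfolding block_swap_def by (auto split: if_splits)
  moreover from this have "r = r'"
    using eq[of "Suc i"] assms(2-) unfolding block_swap_def by (auto split: if_splits)
  moreover from calculation have "s = s'"
    using eq[of "Suc (i + min s s')"] assms(2-) unfolding block_swap_def by (auto split: if_splits)
  ultimately show ?thesis by blast
qed

lemma avoids_id_iff: "avoids_id k m p \<longleftrightarrow> (\<forall>I \<subseteq> {1..m}. strict_mono_on I p \<longrightarrow> card I < k)"
proof
  assume avoid: "avoids_id k m p"
  show "\<forall>I \<subseteq> {1..m}. strict_mono_on I p \<longrightarrow> card I < k"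
  proof (intro allI impI, rule ccontr)
    fix I assume I: "I \<subseteq> {1..m}" "strict_mono_on I p" "\<not> card I < k"
    then obtain J where J: "J \<subseteq> I" "card J = k"
      using obtain_subset_with_card_n[of k I] by auto
    then have "J \<subseteq> {1..m}" "strict_mono_on J p"
      using I monotone_on_subset by blast+
    with J(2) avoid show False
      unfolding avoids_id_def strict_mono_on_def by blast
  qed
next
  assume bound: "\<forall>I \<subseteq> {1..m}. strict_mono_on I p \<longrightarrow> card I < k"
  show "avoids_id k m p"
    unfolding avoids_id_def
  proof
    assume "\<exists>I. I \<subseteq> {1..m} \<and> card I = k \<and> (\<forall>x\<in>I. \<forall>y\<in>I. x < y \<longrightarrow> p x < p y)"
    then obtain I where "I \<subseteq> {1..m}" "card I = k" "strict_mono_on I p"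
      unfolding strict_mono_on_def by blast
    with bound show False by blast
  qed
qed

lemma strict_mono_on_block_swap_Compl_left: "strict_mono_on (- {i+1..i+s}) (block_swap i r s)"
  by (rule strict_mono_onI) (auto simp: block_swap_def)

lemma strict_mono_on_block_swap_Compl_right: "strict_mono_on (- {i+s+1..i+s+r}) (block_swap i r s)"
  by (rule strict_mono_onI) (auto simp: block_swap_def)

lemma avoids_id_block_swap_iff:
  assumes "i + r + s \<le> m"
  shows "avoids_id k m (block_swap i r s) \<longleftrightarrow> m - min r s < k"
proof -
  define L R where "L = {i+1..i+s}" and "R = {i+s+1..i+s+r}"
  have card_rest: "card ({1..m} - L) = m - s" "card ({1..m} - R) = m - r"
    using assms unfolding L_def R_def by (simp_all add: card_Diff_subset)
  have mono_rest: "strict_mono_on ({1..m} - L) (block_swap i r s)"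
    "strict_mono_on ({1..m} - R) (block_swap i r s)"
    unfolding L_def R_def
    by (rule monotone_on_subset[OF strict_mono_on_block_swap_Compl_left], blast)
       (rule monotone_on_subset[OF strict_mono_on_block_swap_Compl_right], blast)
  have disjoint: "I \<inter> L = {} \<or> I \<inter> R = {}" if mono: "strict_mono_on I (block_swap i r s)" for I
  proof (rule ccontr)
    assume "\<not> (I \<inter> L = {} \<or> I \<inter> R = {})"
    then obtain x y where "x \<in> I" "x \<in> L" "y \<in> I" "y \<in> R" by blast
    moreover from this have "x < y" "block_swap i r s y < block_swap i r s x"
      unfolding L_def R_def block_swap_def by auto
    ultimately show False using strict_mono_onD[OF mono] by (meson less_asym)
  qed
  show ?thesis
  proof
    assume "avoids_id k m (block_swap i r s)"
    then have bound: "\<forall>I \<subseteq> {1..m}. strict_mono_on I (block_swap i r s) \<longrightarrow> card I < k"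
      unfolding avoids_id_iff .
    have "m - s < k" "m - r < k"
      using bound[rule_format, OF Diff_subset mono_rest(1)]
        bound[rule_format, OF Diff_subset mono_rest(2)] card_rest by simp_all
    then show "m - min r s < k" by linarith
  next
    assume less: "m - min r s < k"
    show "avoids_id k m (block_swap i r s)"
      unfolding avoids_id_iff
    proof (intro allI impI)
      fix I assume "I \<subseteq> {1..m}" "strict_mono_on I (block_swap i r s)"
      then have "I \<subseteq> {1..m} - L \<or> I \<subseteq> {1..m} - R" using disjoint by blast
      then have "card I \<le> m - s \<or> card I \<le> m - r"
        using card_rest card_mono[of "{1..m} - L" I] card_mono[of "{1..m} - R" I] by auto
      with less show "card I < k" by linarith
    qed
  qed
qed

section \<open>Bigrassmannian permutations are block swaps\<close>

lemma grassmannian_increasing_blocks: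
  assumes inj: "inj p" and grass: "grassmannian m p"
  obtains d where "1 \<le> d" "d \<le> m + 1" "strict_mono_on {1..<d} p" "strict_mono_on {d..<m+1} p"
proof -
  have "finite (descents m p)"
    unfolding descents_def by (rule finite_subset[of _ "{..<m}"]) auto
  with grass have single: "\<forall>a\<in>descents m p. \<forall>b\<in>descents m p. a = b"
    unfolding grassmannian_def by (simp add: card_le_Suc0_iff_eq)
  obtain t where t: "t \<le> m" "descents m p \<subseteq> {t}"
  proof (cases "descents m p = {}")
    case True
    then show thesis using that[of m] by simp
  next
    case False
    then obtain t where "t \<in> descents m p" by blast
    with single show thesis using that[of t] unfolding descents_def by auto
  qed
  have step: "p x < p (Suc x)" if "1 \<le> x" "Suc x \<le> m" "x \<noteq> t" for x
  proof -
    have "\<not> p (Suc x) < p x" using that t(2) unfolding descents_def by auto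
    moreover have "p x \<noteq> p (Suc x)" using inj by (metis injD n_not_Suc_n)
    ultimately show ?thesis by simp
  qed
  show thesis
  proof (rule that[of "Suc t"])
    show "strict_mono_on {1..<Suc t} p" "strict_mono_on {Suc t..<m+1} p"
      using t(1) by (auto intro!: strict_mono_on_atLeastLessThan_Suc step)
  qed (use t in auto)
qed

lemma increasing_blocks_images:
  fixes p :: "nat \<Rightarrow> nat"
  assumes p: "p permutes {1..m}"
    and d: "1 \<le> d" "d \<le> m + 1" and e: "1 \<le> e" "e \<le> m + 1"
    and p_mono: "strict_mono_on {1..<d} p" "strict_mono_on {d..<m+1} p"
    and q_mono: "strict_mono_on {1..<e} (inv p)" "strict_mono_on {e..<m+1} (inv p)"
  obtains \<alpha> \<beta> \<gamma> \<delta>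
  where "1 \<le> \<alpha>" "\<alpha> \<le> d" "d \<le> \<beta>" "\<beta> \<le> m + 1" "1 \<le> \<gamma>" "\<gamma> \<le> e" "e \<le> \<delta>" "\<delta> \<le> m + 1"
    and "p ` {1..<\<alpha>} = {1..<\<gamma>}" "p ` {\<alpha>..<d} = {e..<\<delta>}"
    and "p ` {d..<\<beta>} = {\<gamma>..<e}" "p ` {\<beta>..<m+1} = {\<delta>..<m+1}"
proof -
  txt \<open>\<alpha> and \<beta> cut the two runs of positions where the value drops below e;
    \<gamma> and \<delta> cut the two runs of values where the position drops below d.\<close>
  note cut = mono_on_atLeastLessThan_cut[OF strict_mono_on_imp_mono_on]
  obtain \<alpha> where \<alpha>: "1 \<le> \<alpha>" "\<alpha> \<le> d" "\<And>x. x \<in> {1..<d} \<Longrightarrow> p x < e \<longleftrightarrow> x < \<alpha>"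
    using cut[OF p_mono(1) d(1)] by blast
  obtain \<beta> where \<beta>: "d \<le> \<beta>" "\<beta> \<le> m + 1" "\<And>x. x \<in> {d..<m+1} \<Longrightarrow> p x < e \<longleftrightarrow> x < \<beta>"
    using cut[OF p_mono(2) d(2)] by blast
  obtain \<gamma> where \<gamma>: "1 \<le> \<gamma>" "\<gamma> \<le> e" "\<And>y. y \<in> {1..<e} \<Longrightarrow> inv p y < d \<longleftrightarrow> y < \<gamma>"
    using cut[OF q_mono(1) e(1)] by blast
  obtain \<delta> where \<delta>: "e \<le> \<delta>" "\<delta> \<le> m + 1" "\<And>y. y \<in> {e..<m+1} \<Longrightarrow> inv p y < d \<longleftrightarrow> y < \<delta>"
    using cut[OF q_mono(2) e(2)] by blast
  note image = permutes_image_restrict[OF p]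
  have "{x \<in> {1..m}. x < d \<and> p x < e} = {1..<\<alpha>}"
    "{x \<in> {1..m}. x < d \<and> \<not> p x < e} = {\<alpha>..<d}"
    "{x \<in> {1..m}. \<not> x < d \<and> p x < e} = {d..<\<beta>}"
    "{x \<in> {1..m}. \<not> x < d \<and> \<not> p x < e} = {\<beta>..<m+1}"
    using \<alpha> \<beta> d by auto
  moreover have "{y \<in> {1..m}. y < e \<and> inv p y < d} = {1..<\<gamma>}"
    "{y \<in> {1..m}. \<not> y < e \<and> inv p y < d} = {e..<\<delta>}"
    "{y \<in> {1..m}. y < e \<and> \<not> inv p y < d} = {\<gamma>..<e}"
    "{y \<in> {1..m}. \<not> y < e \<and> \<not> inv p y < d} = {\<delta>..<m+1}"
    using \<gamma> \<delta> e by auto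
  ultimately show thesis
    using that \<alpha>(1,2) \<beta>(1,2) \<gamma>(1,2) \<delta>(1,2)
      image[of "\<lambda>x. x < d" "\<lambda>y. y < e"] image[of "\<lambda>x. x < d" "\<lambda>y. \<not> y < e"]
      image[of "\<lambda>x. \<not> x < d" "\<lambda>y. y < e"] image[of "\<lambda>x. \<not> x < d" "\<lambda>y. \<not> y < e"]
    by simp
qed

lemma increasing_blocks_imp_block_swap:
  fixes p :: "nat \<Rightarrow> nat"
  assumes p: "p permutes {1..m}"
    and d: "1 \<le> d" "d \<le> m + 1" and e: "1 \<le> e" "e \<le> m + 1"
    and p_mono: "strict_mono_on {1..<d} p" "strict_mono_on {d..<m+1} p"
    and q_mono: "strict_mono_on {1..<e} (inv p)" "strict_mono_on {e..<m+1} (inv p)"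
  obtains i r s where "i + r + s \<le> m" "p = block_swap i r s"
proof -
  obtain \<alpha> \<beta> \<gamma> \<delta>
    where bounds: "1 \<le> \<alpha>" "\<alpha> \<le> d" "d \<le> \<beta>" "\<beta> \<le> m + 1" "1 \<le> \<gamma>" "\<gamma> \<le> e" "e \<le> \<delta>" "\<delta> \<le> m + 1"
      and img: "p ` {1..<\<alpha>} = {1..<\<gamma>}" "p ` {\<alpha>..<d} = {e..<\<delta>}"
        "p ` {d..<\<beta>} = {\<gamma>..<e}" "p ` {\<beta>..<m+1} = {\<delta>..<m+1}"
    using increasing_blocks_images[OF assms] .
  have mono: "strict_mono_on {1..<\<alpha>} p" "strict_mono_on {\<alpha>..<d} p"
    "strict_mono_on {d..<\<beta>} p" "strict_mono_on {\<beta>..<m+1} p"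
    using bounds by (auto intro: monotone_on_subset[OF p_mono(1)] monotone_on_subset[OF p_mono(2)])
  note shift = strict_mono_on_onto_atLeastLessThan
  define i r s where "i = \<alpha> - 1" and "r = e - \<alpha>" and "s = d - \<alpha>"
  have blocks: "\<alpha> = i + 1" "d = i + s + 1" "e = i + r + 1" "\<beta> = i + s + r + 1" "\<gamma> = \<alpha>" "\<delta> = \<beta>"
    using shift(2)[OF mono(1) img(1)] shift(2)[OF mono(3) img(3)] shift(2)[OF mono(4) img(4)] bounds
    unfolding i_def r_def s_def by linarith+
  have "p x = block_swap i r s x" for x
  proof -
    consider "x \<notin> {1..m}" | "x \<in> {1..<\<alpha>}" | "x \<in> {\<alpha>..<d}" | "x \<in> {d..<\<beta>}" | "x \<in> {\<beta>..<m+1}"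
      using bounds by fastforce
    then show ?thesis
    proof cases
      case 1
      then have "x = 0 \<or> i + s + r < x" using blocks bounds by auto
      with 1 show ?thesis using permutes_not_in[OF p] by (auto simp: block_swap_def)
    next
      case 2
      with blocks show ?thesis using shift(1)[OF mono(1) img(1)] by (simp add: block_swap_def)
    next
      case 3
      with blocks show ?thesis using shift(1)[OF mono(2) img(2)] by (simp add: block_swap_def)
    next
      case 4
      with blocks show ?thesis using shift(1)[OF mono(3) img(3)] by (simp add: block_swap_def Suc_diff_Suc)
    next
      case 5
      with blocks show ?thesis using shift(1)[OF mono(4) img(4)] by (simp add: block_swap_def)
    qed
  qed
  then have "p = block_swap i r s" ..
  moreover have "i + r + s \<le> m"
    using blocks bounds by linarith
  ultimately show thesis by (rule that[rotated])
qed

lemma bigrassmannian_imp_block_swap: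
  assumes p: "p permutes {1..m}" and "bigrassmannian m p"
  obtains i r s where "i + r + s \<le> m" "p = block_swap i r s"
proof -
  have q: "inv p permutes {1..m}" using permutes_inv[OF p] .
  obtain d where "1 \<le> d" "d \<le> m + 1" "strict_mono_on {1..<d} p" "strict_mono_on {d..<m+1} p"
    using grassmannian_increasing_blocks[OF permutes_inj[OF p]] assms(2)
    unfolding bigrassmannian_def by blast
  moreover obtain e where "1 \<le> e" "e \<le> m + 1"
    "strict_mono_on {1..<e} (inv p)" "strict_mono_on {e..<m+1} (inv p)"
    using grassmannian_increasing_blocks[OF permutes_inj[OF q]] assms(2)
    unfolding bigrassmannian_def by blast
  ultimately show thesis using increasing_blocks_imp_block_swap[OF p] that by blast
qed

section \<open>Counting lattice points\<close>

lemma card_add_double_le_add_2: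
  fixes f :: "'a \<Rightarrow> nat"
  assumes "finite {x. f x \<le> n + 2}"
  shows "card {(x, a). f x + 2 * a \<le> n + 2} = card {x. f x \<le> n + 2} + card {(x, a). f x + 2 * a \<le> n}"
proof -
  let ?A = "(\<lambda>x. (x, 0)) ` {x. f x \<le> n + 2}" and ?B = "(\<lambda>(x, a). (x, Suc a)) ` {(x, a). f x + 2 * a \<le> n}"
  have split: "{(x, a). f x + 2 * a \<le> n + 2} = ?A \<union> ?B"
  proof (intro set_eqI iffI)
    fix z assume "z \<in> {(x, a). f x + 2 * a \<le> n + 2}"
    then show "z \<in> ?A \<union> ?B"
      by (cases z; rename_tac a; case_tac a) (auto simp: image_iff)
  qed auto
  have "finite {(x, a). f x + 2 * a \<le> n}"
    by (rule finite_subset[of _ "{x. f x \<le> n + 2} \<times> {..n}"]) (use assms in auto)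
  moreover have "?A \<inter> ?B = {}" by auto
  moreover have "card ?A = card {x. f x \<le> n + 2}" "card ?B = card {(x, a). f x + 2 * a \<le> n}"
    by (auto intro!: card_image simp: inj_on_def)
  ultimately show ?thesis
    unfolding split using assms by (simp add: card_Un_disjoint)
qed

definition lattice_pairs :: "nat \<Rightarrow> nat" where
  "lattice_pairs n = card {(i, b). i + 2 * b \<le> n}"

text \<open>The pair (i, b) is nested so that card_add_double_le_add_2 splits off the last coordinate.\<close>

definition lattice_triples :: "nat \<Rightarrow> nat" where
  "lattice_triples n = card {((i, b), a). i + 2 * b + 2 * a \<le> n}"

lemma lattice_pairs_add_2: "lattice_pairs (n + 2) = lattice_pairs n + (n + 3)"
  unfolding lattice_pairs_def using card_add_double_le_add_2[of "\<lambda>i. i" n] by simp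

lemma lattice_triples_add_2: "lattice_triples (n + 2) = lattice_triples n + lattice_pairs (n + 2)"
proof -
  have pairs: "{(i, b). i + 2 * b \<le> n + 2} = {x. (\<lambda>(i, b). i + 2 * b) x \<le> n + 2}" by auto
  have "finite {(i, b). i + 2 * b \<le> n + 2}"
    by (rule finite_subset[of _ "{..n+2} \<times> {..n+2}"]) auto
  then show ?thesis
    unfolding lattice_triples_def lattice_pairs_def
    using card_add_double_le_add_2[of "\<lambda>(i, b). i + 2 * b" n] pairs by (simp add: case_prod_beta')
qed

lemma lattice_pairs_0: "lattice_pairs 0 = 1" and lattice_pairs_1: "lattice_pairs 1 = 2"
proof -
  have "{(i, b). i + 2 * b \<le> 0} = {(0::nat, 0::nat)}"
    "{(i, b). i + 2 * b \<le> 1} = {(0::nat, 0::nat), (1, 0)}"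
    by auto
  then show "lattice_pairs 0 = 1" "lattice_pairs 1 = 2" unfolding lattice_pairs_def by simp_all
qed

lemma lattice_triples_0: "lattice_triples 0 = 1" and lattice_triples_1: "lattice_triples 1 = 2"
proof -
  have "{((i, b), a). i + 2 * b + 2 * a \<le> 0} = {((0::nat, 0::nat), 0::nat)}"
    "{((i, b), a). i + 2 * b + 2 * a \<le> 1} = {((0::nat, 0::nat), 0::nat), ((1, 0), 0)}"
    by auto
  then show "lattice_triples 0 = 1" "lattice_triples 1 = 2" unfolding lattice_triples_def by simp_all
qed

lemma lattice_pairs_even: "lattice_pairs (2 * u) = (u + 1) * (u + 1)"
  by (induction u) (simp_all add: lattice_pairs_0 lattice_pairs_add_2[of "2 * _", simplified])

lemma lattice_pairs_odd: "lattice_pairs (2 * u + 1) = (u + 1) * (u + 2)"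
proof (induction u)
  case 0
  show ?case using lattice_pairs_1 by simp
qed (simp add: lattice_pairs_add_2[of "2 * _ + 1", simplified])

lemma lattice_triples_even: "6 * lattice_triples (2 * u) = (u + 1) * (u + 2) * (2 * u + 3)"
proof (induction u)
  case (Suc u)
  have "lattice_triples (2 * Suc u) = lattice_triples (2 * u) + lattice_pairs (2 * Suc u)"
    using lattice_triples_add_2[of "2 * u"] by simp
  with Suc.IH lattice_pairs_even[of "Suc u"] show ?case by (simp add: algebra_simps)
qed (simp add: lattice_triples_0)

lemma lattice_triples_odd: "3 * lattice_triples (2 * u + 1) = (u + 1) * (u + 2) * (u + 3)"
proof (induction u)
  case 0
  show ?case using lattice_triples_1 by simp
next
  case (Suc u)
  have "lattice_triples (2 * Suc u + 1) = lattice_triples (2 * u + 1) + lattice_pairs (2 * Suc u + 1)"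
    using lattice_triples_add_2[of "2 * u + 1"] by simp
  with Suc.IH lattice_pairs_odd[of "Suc u"] show ?case by (simp add: algebra_simps)
qed

lemma six_times_choose_3: "6 * (n + 3 choose 3) = (n + 3) * (n + 2) * (n + 1)"
proof -
  have three: "3 * (n + 3 choose 3) = (n + 3) * (n + 2 choose 2)"
    using Suc_times_binomial[of 2 "n + 2"] by (simp add: numeral_eq_Suc)
  have two: "2 * (n + 2 choose 2) = (n + 2) * (n + 1)"
    using Suc_times_binomial[of 1 "n + 1"] by (simp add: numeral_eq_Suc)
  have "6 * (n + 3 choose 3) = (n + 3) * (2 * (n + 2 choose 2))"
    using three by simp
  also have "\<dots> = (n + 3) * (n + 2) * (n + 1)"
    unfolding two by (simp only: mult.assoc)
  finally show ?thesis .
qed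

lemma a_seq_lattice_triples: "a_seq (int n + 2) = of_nat (lattice_triples n)"
proof (cases "even n")
  case True
  then obtain u where n: "n = 2 * u" by blast
  have "6 * (2 * u + 4 choose 3) = (2 * u + 4) * (2 * u + 3) * (2 * u + 2)"
    using six_times_choose_3[of "2 * u + 1"] by (simp add: algebra_simps)
  also have "\<dots> = 4 * ((u + 1) * (u + 2) * (2 * u + 3))"
    by (simp add: algebra_simps)
  also have "\<dots> = 4 * (6 * lattice_triples n)"
    using lattice_triples_even[of u] n by simp
  finally have "(2 * u + 4 choose 3) = 4 * lattice_triples n" by simp
  moreover have "nat (int n + 2 + 2) = 2 * u + 4" using n by simp
  ultimately show ?thesis using True unfolding a_seq_def by simp
next
  case False
  then obtain u where n: "n = 2 * u + 1" by (blast elim: oddE)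
  have "(2 * u + 2) * (2 * u + 4) * (2 * u + 6) = 8 * ((u + 1) * (u + 2) * (u + 3))"
    by (simp add: algebra_simps)
  also have "\<dots> = 24 * lattice_triples n"
    using lattice_triples_odd[of u] n by simp
  finally have "(2 * u + 2) * (2 * u + 4) * (2 * u + 6) = 24 * lattice_triples n" .
  moreover have "(of_int (int n + 2 - 1) * of_int (int n + 2 + 1) * of_int (int n + 2 + 3) :: rat)
      = of_nat ((2 * u + 2) * (2 * u + 4) * (2 * u + 6))"
    using n by (simp add: algebra_simps)
  ultimately have "(of_int (int n + 2 - 1) * of_int (int n + 2 + 1) * of_int (int n + 2 + 3) :: rat)
      = 24 * of_nat (lattice_triples n)"
    by (metis of_nat_mult of_nat_numeral)
  then show ?thesis using False unfolding a_seq_def by simp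
qed

lemma card_odd_params_above:
  assumes "odd c"
  shows "card {(i, r, s). i + r + s \<le> m \<and> odd r \<and> odd s \<and> c \<le> r \<and> c \<le> s}
    = (if 2 * c \<le> m then lattice_triples (m - 2 * c) else 0)"
proof (cases "2 * c \<le> m")
  case True
  let ?f = "\<lambda>((i, b), a). (i, c + 2 * a, c + 2 * b)"
  have params: "{(i, r, s). i + r + s \<le> m \<and> odd r \<and> odd s \<and> c \<le> r \<and> c \<le> s}
      = ?f ` {((i, b), a). i + 2 * b + 2 * a \<le> m - 2 * c}"
  proof (intro set_eqI iffI)
    fix x assume "x \<in> {(i, r, s). i + r + s \<le> m \<and> odd r \<and> odd s \<and> c \<le> r \<and> c \<le> s}"
    then obtain i r s where x: "x = (i, r, s)" "i + r + s \<le> m" "odd r" "odd s" "c \<le> r" "c \<le> s"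
      by blast
    from x assms have "even (r - c)" "even (s - c)" by simp_all
    then obtain a b where "r - c = 2 * a" "s - c = 2 * b" by (blast elim: evenE)
    with x have "r = c + 2 * a" "s = c + 2 * b" by simp_all
    with x have "x = ?f ((i, b), a)" "((i, b), a) \<in> {((i, b), a). i + 2 * b + 2 * a \<le> m - 2 * c}"
      by auto
    then show "x \<in> ?f ` {((i, b), a). i + 2 * b + 2 * a \<le> m - 2 * c}" by blast
  qed (use assms True in auto)
  have "inj_on ?f {((i, b), a). i + 2 * b + 2 * a \<le> m - 2 * c}"
    by (auto simp: inj_on_def)
  then show ?thesis
    using True unfolding params lattice_triples_def by (simp only: card_image if_True)
next
  case False
  then have "{(i, r, s). i + r + s \<le> m \<and> odd r \<and> odd s \<and> c \<le> r \<and> c \<le> s} = {}"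
    by auto
  with False show ?thesis by (simp only: card.empty if_False)
qed

lemma count_eq_a_seq:
  fixes k m c :: nat
  assumes "1 \<le> k" "1 \<le> m" and c: "c = 2 * ((m - k + 1) div 2) + 1"
  shows "(if 2 * c \<le> m then of_nat (lattice_triples (m - 2 * c)) else 0) =
    (if m \<le> k then a_seq (int m)
     else if m < 2 * k \<and> even (m - k) then a_seq (2 * int k - int m)
     else if m < 2 * k \<and> odd (m - k) then a_seq (2 * int k - int m - 2)
     else 0)"
proof -
  have lattice: "of_nat (lattice_triples (m - 2 * c)) = a_seq (int m - 2 * int c + 2)" if "2 * c \<le> m"
    using a_seq_lattice_triples[of "m - 2 * c"] that by (simp add: of_nat_diff)
  have vanish: "a_seq n = 0" if "-1 \<le> n" "n \<le> 1" for n
  proof -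
    from that have "n = -1 \<or> n = 0 \<or> n = 1" by linarith
    then show ?thesis by (auto simp: a_seq_def)
  qed
  consider (small) "m \<le> k" | (even) "k < m" "m < 2 * k" "even (m - k)"
    | (odd) "k < m" "m < 2 * k" "odd (m - k)" | (large) "2 * k \<le> m"
    by linarith
  then show ?thesis
  proof cases
    case small
    then have "c = 1" using c by simp
    then show ?thesis using small lattice vanish[of 1] assms(2) by (cases "m = 1") auto
  next
    case even
    then have "c = m - k + 1" using c by presburger
    then show ?thesis using even lattice vanish[of "2 * int k - int m"] by auto
  next
    case odd
    then have "c = m - k + 2" using c by presburger
    then show ?thesis using odd lattice vanish[of "2 * int k - int m - 2"] by auto
  next
    case large
    then have "m < 2 * c" using c by presburger
    then show ?thesis using large assms(1) by simp
  qed
qed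

lemma card_odd_bigrassmannian_avoiding:
  "card {p. p permutes {1..m} \<and> bigrassmannian m p \<and> odd_perm m p \<and> avoids_id k m p} =
   card {(i, r, s). i + r + s \<le> m \<and> odd r \<and> odd s \<and> m - min r s < k}"
proof -
  let ?P = "{(i, r, s). i + r + s \<le> m \<and> odd r \<and> odd s \<and> m - min r s < k}"
  let ?swap = "\<lambda>(i, r, s). block_swap i r s"
  have "{p. p permutes {1..m} \<and> bigrassmannian m p \<and> odd_perm m p \<and> avoids_id k m p} = ?swap ` ?P"
  proof (intro set_eqI iffI)
    fix p assume "p \<in> {p. p permutes {1..m} \<and> bigrassmannian m p \<and> odd_perm m p \<and> avoids_id k m p}"
    then have p: "p permutes {1..m}" "bigrassmannian m p" "odd_perm m p" "avoids_id k m p"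
      by simp_all
    obtain i r s where "i + r + s \<le> m" "p = block_swap i r s"
      using bigrassmannian_imp_block_swap[OF p(1,2)] .
    with p(3,4) have "(i, r, s) \<in> ?P" "p = ?swap (i, r, s)"
      by (simp_all add: odd_perm_block_swap_iff avoids_id_block_swap_iff)
    then show "p \<in> ?swap ` ?P" by blast
  next
    fix p assume "p \<in> ?swap ` ?P"
    then obtain i r s where "(i, r, s) \<in> ?P" "p = block_swap i r s" by auto
    then show "p \<in> {p. p permutes {1..m} \<and> bigrassmannian m p \<and> odd_perm m p \<and> avoids_id k m p}"
      using block_swap_permutes[of i r s m]
      by (simp add: bigrassmannian_block_swap odd_perm_block_swap_iff avoids_id_block_swap_iff)
  qed
  moreover have "inj_on ?swap ?P"
    by (auto simp: inj_on_def dest!: block_swap_inject intro: odd_pos)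
  ultimately show ?thesis by (simp add: card_image)
qed

theorem theorem5p4:
  fixes k m :: nat
  assumes "k \<ge> 1" and "m \<ge> 1"
  shows "of_nat (card {p. p permutes {1..m} \<and> bigrassmannian m p \<and> odd_perm m p
                          \<and> avoids_id k m p}) =
    (if m \<le> k then a_seq (int m)
     else if m < 2 * k \<and> even (m - k) then a_seq (2 * int k - int m)
     else if m < 2 * k \<and> odd (m - k) then a_seq (2 * int k - int m - 2)
     else 0)"
proof -
  define c where "c = 2 * ((m - k + 1) div 2) + 1" \<comment> \<open>the least odd number exceeding m - k\<close>
  have least_odd: "m - r < k \<longleftrightarrow> c \<le> r" if "odd r" for r
    using that assms(1) unfolding c_def by presburger
  have "{(i, r, s). i + r + s \<le> m \<and> odd r \<and> odd s \<and> m - min r s < k} =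
      {(i, r, s). i + r + s \<le> m \<and> odd r \<and> odd s \<and> c \<le> r \<and> c \<le> s}"
    using least_odd by (auto simp: min_def)
  then have "card {p. p permutes {1..m} \<and> bigrassmannian m p \<and> odd_perm m p \<and> avoids_id k m p}
      = (if 2 * c \<le> m then lattice_triples (m - 2 * c) else 0)"
    using card_odd_bigrassmannian_avoiding card_odd_params_above[of c m] unfolding c_def by simp
  then have "of_nat (card {p. p permutes {1..m} \<and> bigrassmannian m p \<and> odd_perm m p
      \<and> avoids_id k m p}) = (if 2 * c \<le> m then of_nat (lattice_triples (m - 2 * c)) else (0::rat))"
    by simp
  also have "\<dots> = (if m \<le> k then a_seq (int m)
     else if m < 2 * k \<and> even (m - k) then a_seq (2 * int k - int m)
     else if m < 2 * k \<and> odd (m - k) then a_seq (2 * int k - int m - 2)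
     else 0)"
    by (rule count_eq_a_seq[OF assms c_def])
  finally show ?thesis .
qed

end
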